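(* Let $A\subseteq B$ be convex subsets of a real topological vector space $X$ such that $\operatorname{icr} A=\operatorname{fri} A$ and $A\cap\operatorname{fri} B\neq\emptyset$. Then $\operatorname{fri} A\subseteq\operatorname{fri} B$.
   Context: For a convex set $C$, a convex subset $F\subseteq C$ is a face of $C$ if for every $x\in F$ and all $y,z\in C$ with $x\in(y,z)=\{(1-t)y+tz:t\in(0,1)\}$ we have $y,z\in F$; $F_{\min}(x,C)$ is the intersection of all faces of $C$ containing $x\in C$. The intrinsic core is $\operatorname{icr} C=\{x\in C:\forall y\in C\ \exists z\in C,\ x\in(y,z)\}$ and the face relative interior is $\operatorname{fri} C=\{x\in C: C\subseteq\overline{F_{\min}(x,C)}\}$. *)

theory Defs
  imports "HOL-Analysis.Analysis"
begin

definition oseg :: "'a::real_vector \<Rightarrow> 'a \<Rightarrow> 'a set" where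
  "oseg y z = {(1 - t) *\<^sub>R y + t *\<^sub>R z | t. 0 < t \<and> t < 1}"

definition is_face :: "'a::real_vector set \<Rightarrow> 'a set \<Rightarrow> bool" where
  "is_face F C \<longleftrightarrow> F \<subseteq> C \<and> convex F \<and>
     (\<forall>x\<in>F. \<forall>y\<in>C. \<forall>z\<in>C. x \<in> oseg y z \<longrightarrow> y \<in> F \<and> z \<in> F)"

definition Fmin :: "'a::real_vector \<Rightarrow> 'a set \<Rightarrow> 'a set" where
  "Fmin x C = \<Inter>{F. is_face F C \<and> x \<in> F}"

definition icr :: "'a::real_vector set \<Rightarrow> 'a set" where
  "icr C = {x \<in> C. \<forall>y\<in>C. \<exists>z\<in>C. x \<in> oseg y z}"

definition fri :: "'a::{real_vector,topological_space} set \<Rightarrow> 'a set" where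
  "fri C = {x \<in> C. C \<subseteq> closure (Fmin x C)}"

definition tvs_ops :: "'a::{real_vector,topological_space} itself \<Rightarrow> bool" where
  "tvs_ops _ \<longleftrightarrow> continuous_on UNIV (\<lambda>p::'a \<times> 'a. fst p + snd p) \<and>
                 continuous_on UNIV (\<lambda>p::real \<times> 'a. fst p *\<^sub>R snd p)"

end

theory Submission
  imports Defs
begin

text \<open>A point x of icr A lies in an open segment (a, z) of A whose endpoint a is in fri B.
  Every face of B through x then contains a, so the minimal face of B at x contains the
  minimal face at a, whose closure already covers B.\<close>

lemma Fmin_subset_Fmin_oseg:
  assumes "x \<in> oseg y z" and "y \<in> C" and "z \<in> C"
  shows "Fmin y C \<subseteq> Fmin x C"
proof -
  have "is_face F C \<and> y \<in> F" if "is_face F C" and "x \<in> F" for F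
    using that assms unfolding is_face_def by blast
  then show ?thesis
    unfolding Fmin_def by blast
qed

lemma fri_if_Fmin_superset:
  assumes "a \<in> fri C" and "x \<in> C" and "Fmin a C \<subseteq> Fmin x C"
  shows "x \<in> fri C"
proof -
  have "C \<subseteq> closure (Fmin a C)"
    using assms(1) by (simp add: fri_def)
  also have "\<dots> \<subseteq> closure (Fmin x C)"
    using assms(3) by (rule closure_mono)
  finally show ?thesis
    using assms(2) by (simp add: fri_def)
qed

theorem proposition4p5:
  fixes A B :: "'a::{real_vector,topological_space} set"
  assumes "tvs_ops TYPE('a)"
    and "convex A" and "convex B" and "A \<subseteq> B"
    and "icr A = fri A"
    and "A \<inter> fri B \<noteq> {}"
  shows "fri A \<subseteq> fri B"
proof
  fix x assume "x \<in> fri A"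
  then have "x \<in> icr A"
    using assms(5) by simp
  then have xA: "x \<in> A" and segments: "\<forall>y\<in>A. \<exists>z\<in>A. x \<in> oseg y z"
    by (auto simp: icr_def)
  obtain a where aA: "a \<in> A" and aB: "a \<in> fri B"
    using assms(6) by blast
  then obtain z where zA: "z \<in> A" and x_seg: "x \<in> oseg a z"
    using segments by blast
  have "Fmin a B \<subseteq> Fmin x B"
    using Fmin_subset_Fmin_oseg[OF x_seg] aA zA assms(4) by blast
  moreover have "x \<in> B"
    using xA assms(4) by blast
  ultimately show "x \<in> fri B"
    using fri_if_Fmin_superset[OF aB] by blast
qed

end
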